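(* Let $C=(1,c_2,c_3,c_4,c_5,c_6)$ be a canonical system whose subsystem $C'=(1,c_2,c_3,c_4,c_5)$ is noncanonical, and let $\ell=\lceil c_5/c_3\rceil$. Then $C$ satisfies (a), (b), or (c): (a) $C=(1,2,3,c_4,c_4+1,2c_4)$ and $c_4>4$; (b) $C=(1,c_2,2c_2-1,c_4,c_2+c_4-1,2c_4-1)$, $c_4\ge 3c_2-1$, $\mathrm{grd}_C(\ell c_3)=\ell c_3-c_5+1-\lfloor(\ell c_3-c_5)/c_2\rfloor(c_2-1)$, and $\mathrm{grd}_C(\ell c_3)\le\ell$; (c) $C=(1,c_2,2c_2,c_4,c_2+c_4,2c_4)$, $c_4\ge 3c_2-1$, $c_4\ne 3c_2$, $\mathrm{grd}_C(\ell c_3)=\ell c_3-c_5+1-\lfloor(\ell c_3-c_5)/c_2\rfloor(c_2-1)$, and $\mathrm{grd}_C(\ell c_3)\le\ell$.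
   Context: A system is a tuple $C=(c_1,\dots,c_n)$ of integers with $1=c_1<c_2<\dots<c_n$; for $k\le n$, $(c_1,\dots,c_k)$ is a subsystem. For a positive integer $v$, $\mathrm{opt}_C(v)$ is the minimum of $\sum_i x_i$ over $x\in\mathbb{Z}_{\ge0}^n$ with $\sum_i c_ix_i=v$. The greedy representation of $v$ is produced by: for $i=n$ down to $1$, while $c_i\le$ remaining value, take a coin $c_i$. $\mathrm{grd}_C(v)$ is its number of coins. A positive integer $w$ is a counterexample if $\mathrm{opt}_C(w)<\mathrm{grd}_C(w)$; $C$ is canonical if it has none, noncanonical otherwise. *)

theory Defs
  imports Main
begin

text \<open>A coin system is a strictly increasing list of positive integers starting with 1.
  Coin c_i (1-based in the paper) is C ! (i - 1).\<close>
definition is_system :: "nat list \<Rightarrow> bool" where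
  "is_system C \<longleftrightarrow> C \<noteq> [] \<and> hd C = 1 \<and> sorted_wrt (<) C"

definition opt :: "nat list \<Rightarrow> nat \<Rightarrow> nat" where
  "opt C v = (LEAST k. \<exists>x :: nat \<Rightarrow> nat.
      (\<Sum>i<length C. C ! i * x i) = v \<and> (\<Sum>i<length C. x i) = k)"

fun grd_desc :: "nat list \<Rightarrow> nat \<Rightarrow> nat" where
  "grd_desc [] v = 0"
| "grd_desc (c # cs) v = v div c + grd_desc cs (v mod c)"

definition grd :: "nat list \<Rightarrow> nat \<Rightarrow> nat" where
  "grd C v = grd_desc (rev C) v"

definition canonical :: "nat list \<Rightarrow> bool" where
  "canonical C \<longleftrightarrow> (\<forall>w>0. \<not> opt C w < grd C w)"

end

theory Submission
  imports Defs
begin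

(*
  Let w be the smallest counterexample of C' and x an optimal representation of w.  Since
  greedy agrees on C and C' below c6, canonicity of C forces w >= c6; minimality forces x
  to avoid the coins 1 and c5 and gives w < c5 + c for each coin c in x, so greedy on C'
  takes c5 once and x has at most grd (1, c2, c3) (w - c5) coins.  Canonicity of C also
  gives grd (c_i + c_j) <= 2, which leaves only a few values for c_i + c_j minus the
  largest coin below it.  With these relations x must consist of two coins c4, so w = 2 c4
  and 2 c4 - c5 is not a coin of (1, c2, c3), and the same relations leave the three
  families.  In families (b) and (c), c5 <= l c3 < min c6 (c5 + c3), so greedy takes c5
  and then works in (1, c2), while l coins c3 bound it from above.
*)

definition rep_value :: "nat list \<Rightarrow> (nat \<Rightarrow> nat) \<Rightarrow> nat" where
  "rep_value C x = (\<Sum>i<length C. C ! i * x i)"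

definition rep_size :: "nat list \<Rightarrow> (nat \<Rightarrow> nat) \<Rightarrow> nat" where
  "rep_size C x = (\<Sum>i<length C. x i)"

lemma rep_value_Nil [simp]: "rep_value [] x = 0"
  and rep_size_Nil [simp]: "rep_size [] x = 0"
  by (simp_all add: rep_value_def rep_size_def)

lemma rep_value_Cons [simp]: "rep_value (c # C) x = c * x 0 + rep_value C (\<lambda>i. x (Suc i))"
  and rep_size_Cons [simp]: "rep_size (c # C) x = x 0 + rep_size C (\<lambda>i. x (Suc i))"
  by (simp_all only: rep_value_def rep_size_def length_Cons sum.lessThan_Suc_shift nth_Cons_0
      nth_Cons_Suc)

lemma rep_value_snoc: "rep_value (C @ [c]) x = rep_value C x + c * x (length C)"
  and rep_size_snoc: "rep_size (C @ [c]) x = rep_size C x + x (length C)"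
  by (simp_all add: rep_value_def rep_size_def nth_append)

lemma rep_value_cong: "(\<And>i. i < length C \<Longrightarrow> x i = y i) \<Longrightarrow> rep_value C x = rep_value C y"
  and rep_size_cong: "(\<And>i. i < length C \<Longrightarrow> x i = y i) \<Longrightarrow> rep_size C x = rep_size C y"
  by (simp_all add: rep_value_def rep_size_def)

lemma rep_add_coin:
  assumes "i < length C"
  shows "rep_value C (x(i := Suc (x i))) = rep_value C x + C ! i"
    and "rep_size C (x(i := Suc (x i))) = Suc (rep_size C x)"
proof -
  have "rep_value C (x(i := Suc (x i))) = (\<Sum>k<length C. C ! k * x k + (if k = i then C ! i else 0))"
    unfolding rep_value_def by (rule sum.cong) auto
  then show "rep_value C (x(i := Suc (x i))) = rep_value C x + C ! i"
    using assms by (simp add: sum.distrib rep_value_def)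
  have "rep_size C (x(i := Suc (x i))) = (\<Sum>k<length C. x k + (if k = i then 1 else 0))"
    unfolding rep_size_def by (rule sum.cong) auto
  then show "rep_size C (x(i := Suc (x i))) = Suc (rep_size C x)"
    using assms by (simp add: sum.distrib rep_size_def)
qed

lemma opt_altdef: "opt C v = (LEAST k. \<exists>x. rep_value C x = v \<and> rep_size C x = k)"
  by (simp add: opt_def rep_value_def rep_size_def)

lemma opt_le: "rep_value C x = v \<Longrightarrow> opt C v \<le> rep_size C x"
  unfolding opt_altdef by (rule Least_le) blast

lemma opt_attained:
  assumes "rep_value C y = v"
  obtains x where "rep_value C x = v" "rep_size C x = opt C v"
proof -
  have "\<exists>x. rep_value C x = v \<and> rep_size C x = opt C v"
    unfolding opt_altdef by (rule LeastI_ex) (use assms in blast)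
  then show ?thesis using that by blast
qed

lemma opt_add_coin: "rep_value C x = v \<Longrightarrow> i < length C \<Longrightarrow> opt C (v + C ! i) \<le> Suc (rep_size C x)"
  using opt_le rep_add_coin by metis

lemma opt_diff_coin:
  assumes "rep_value C x = v" "i < length C" "0 < x i"
  shows "C ! i \<le> v" and "opt C (v - C ! i) < rep_size C x"
proof -
  define y where "y = x(i := x i - 1)"
  have x: "x = y(i := Suc (y i))"
    using assms(3) by (auto simp: y_def)
  have "rep_value C y + C ! i = v" and "rep_size C x = Suc (rep_size C y)"
    using rep_add_coin[OF assms(2), of y] assms(1) x by simp_all
  then show "C ! i \<le> v" and "opt C (v - C ! i) < rep_size C x"
    using opt_le[of C y] by auto
qed

lemma grd_zero [simp]: "grd C 0 = 0"
proof -
  have "grd_desc cs 0 = 0" for cs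
    by (induction cs) auto
  then show ?thesis
    by (simp add: grd_def)
qed

lemma grd_snoc: "grd (C @ [c]) v = v div c + grd C (v mod c)"
  by (simp add: grd_def)

lemma grd_snoc_less: "v < c \<Longrightarrow> grd (C @ [c]) v = grd C v"
  by (simp add: grd_snoc)

lemma greedy_rep:
  assumes "is_system C"
  obtains x where "rep_value C x = v" "rep_size C x = grd C v"
proof -
  have "\<exists>x. rep_value C x = v \<and> rep_size C x = grd C v" if "C \<noteq> []" "hd C = 1" for v
    using that
  proof (induction C arbitrary: v rule: rev_induct)
    case Nil
    then show ?case by simp
  next
    case (snoc c C)
    show ?case
    proof (cases "C = []")
      case True
      then have "rep_value (C @ [c]) (\<lambda>_. v) = v" "rep_size (C @ [c]) (\<lambda>_. v) = grd (C @ [c]) v"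
        using snoc.prems by (simp_all add: grd_def)
      then show ?thesis by blast
    next
      case False
      then obtain x where x: "rep_value C x = v mod c" "rep_size C x = grd C (v mod c)"
        using snoc.IH snoc.prems by auto
      define y where "y = x(length C := v div c)"
      have "rep_value C y = rep_value C x" "rep_size C y = rep_size C x"
        by (auto simp: y_def intro: rep_value_cong rep_size_cong)
      then have "rep_value (C @ [c]) y = v" "rep_size (C @ [c]) y = grd (C @ [c]) v"
        using x by (simp_all add: rep_value_snoc rep_size_snoc grd_snoc y_def)
      then show ?thesis by blast
    qed
  qed
  then show ?thesis
    using assms that unfolding is_system_def by blast
qed

lemma opt_snoc_le:
  assumes "is_system C"
  shows "opt (C @ [c]) v \<le> opt C v"
proof -
  obtain y where "rep_value C y = v"
    using greedy_rep[OF assms] by metis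
  then obtain x where x: "rep_value C x = v" "rep_size C x = opt C v"
    by (rule opt_attained)
  define x' where "x' = x(length C := 0)"
  have "rep_value C x' = rep_value C x" "rep_size C x' = rep_size C x"
    by (auto simp: x'_def intro: rep_value_cong rep_size_cong)
  then have "rep_value (C @ [c]) x' = v" "rep_size (C @ [c]) x' = opt C v"
    using x by (simp_all add: rep_value_snoc rep_size_snoc x'_def)
  then show ?thesis
    by (metis opt_le)
qed

lemma system_coins_pos: "is_system C \<Longrightarrow> c \<in> set C \<Longrightarrow> 0 < c"
  by (cases C) (auto simp: is_system_def)

lemma grd_desc_append_greater: "(\<And>c. c \<in> set cs \<Longrightarrow> v < c) \<Longrightarrow> grd_desc (cs @ ds) v = grd_desc ds v"
  by (induction cs) auto

lemma grd_largest_coin: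
  assumes sys: "is_system C" and g: "g \<in> set C" "g \<le> v"
    and largest: "\<And>c. c \<in> set C \<Longrightarrow> c \<le> v \<Longrightarrow> c \<le> g"
  shows "grd C v = Suc (grd C (v - g))"
proof -
  obtain A B where C: "C = A @ g # B"
    using split_list[OF g(1)] by blast
  have "u < c" if "u \<le> v" "c \<in> set (rev B)" for u c
    using that sys largest[of c] unfolding C is_system_def by (fastforce simp: sorted_wrt_append)
  then have "grd C u = u div g + grd_desc (rev A) (u mod g)" if "u \<le> v" for u
    using that grd_desc_append_greater[of "rev B" u] by (simp add: grd_def C)
  moreover have "0 < g"
    using sys g(1) by (rule system_coins_pos)
  ultimately show ?thesis
    using g(2) by (simp add: le_div_geq le_mod_geq)
qed

lemma largest_coin_exists:
  assumes "is_system C" "0 < v"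
  obtains g where "g \<in> set C" "g \<le> v" "\<And>c. c \<in> set C \<Longrightarrow> c \<le> v \<Longrightarrow> c \<le> g"
proof
  let ?S = "{c \<in> set C. c \<le> v}"
  have "1 \<in> ?S"
    using assms by (cases C) (auto simp: is_system_def)
  then have "Max ?S \<in> ?S"
    by (intro Max_in) auto
  then show "Max ?S \<in> set C" "Max ?S \<le> v"
    by auto
  show "c \<le> Max ?S" if "c \<in> set C" "c \<le> v" for c
    using that by (intro Max_ge) auto
qed

lemma grd_eq_0_iff: "is_system C \<Longrightarrow> grd C v = 0 \<longleftrightarrow> v = 0"
  by (metis grd_largest_coin grd_zero largest_coin_exists nat.distinct(1) not_gr0)

lemma grd_le_1_iff: 
  assumes "is_system C"
  shows "grd C v \<le> 1 \<longleftrightarrow> v = 0 \<or> v \<in> set C"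
proof (cases "v = 0")
  case False
  then obtain g where g: "g \<in> set C" "g \<le> v" "\<And>c. c \<in> set C \<Longrightarrow> c \<le> v \<Longrightarrow> c \<le> g"
    using largest_coin_exists assms by blast
  then have "grd C v \<le> 1 \<longleftrightarrow> v = g"
    using grd_largest_coin[OF assms g] grd_eq_0_iff[OF assms, of "v - g"] by auto
  also have "\<dots> \<longleftrightarrow> v \<in> set C"
    using g by fastforce
  finally show ?thesis
    using False by simp
qed simp

lemma canonical_grd_le_opt: "canonical C \<Longrightarrow> grd C v \<le> opt C v"
  by (cases "v = 0") (auto simp: canonical_def not_less)

lemma canonical_grd_le_rep_size: "canonical C \<Longrightarrow> rep_value C x = v \<Longrightarrow> grd C v \<le> rep_size C x"
  using canonical_grd_le_opt opt_le le_trans by blast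

lemma canonical_grd_multiple_le:
  assumes "canonical C" "c \<in> set C"
  shows "grd C (k * c) \<le> k"
proof -
  obtain i where i: "i < length C" "c = C ! i"
    using assms(2) by (metis in_set_conv_nth)
  have "rep_value C ((\<lambda>_. 0)(i := k)) = k * c" "rep_size C ((\<lambda>_. 0)(i := k)) = k"
    using i by (simp_all add: rep_value_def rep_size_def if_distrib cong: if_cong)
  then show ?thesis
    by (metis assms(1) canonical_grd_le_rep_size)
qed

lemma canonical_grd_two_coins:
  assumes "canonical C" "c \<in> set C" "c' \<in> set C"
  shows "grd C (c + c') \<le> 2"
proof -
  obtain i j where ij: "i < length C" "j < length C" "c = C ! i" "c' = C ! j"
    using assms(2,3) by (metis in_set_conv_nth)
  define x where "x = (\<lambda>_. 0 :: nat)(i := 1)"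
  have x: "rep_value C x = c" "rep_size C x = 1"
    using rep_add_coin[OF ij(1), of "\<lambda>_. 0"] ij by (simp_all add: x_def rep_value_def rep_size_def)
  have "rep_value C (x(j := Suc (x j))) = c + c'" "rep_size C (x(j := Suc (x j))) = 2"
    using rep_add_coin[OF ij(2), of x] x ij by simp_all
  then show ?thesis
    by (metis assms(1) canonical_grd_le_rep_size)
qed

lemma canonical_two_coins_minus_largest:
  assumes "is_system C" "canonical C" "c \<in> set C" "c' \<in> set C"
    and g: "g \<in> set C" "g \<le> c + c'" "\<And>c''. c'' \<in> set C \<Longrightarrow> c'' \<le> c + c' \<Longrightarrow> c'' \<le> g"
  shows "c + c' - g = 0 \<or> c + c' - g \<in> set C"
  using canonical_grd_two_coins[OF assms(2-4)] grd_largest_coin[OF assms(1) g]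
    grd_le_1_iff[OF assms(1)] by simp

lemma not_canonical_min_counterexample:
  assumes "\<not> canonical C"
  obtains w where "opt C w < grd C w" "\<And>v. v < w \<Longrightarrow> grd C v \<le> opt C v"
proof -
  have "\<exists>w. opt C w < grd C w"
    using assms by (auto simp: canonical_def)
  then show ?thesis
    using that exists_least_iff[of "\<lambda>w. opt C w < grd C w"] by (auto simp: not_less)
qed

text \<open>Kozen and Zaks: the greedy representations of \<open>w\<close> and of \<open>w - c\<close> both start
  with \<open>g\<close>, so if the optimum at \<open>w\<close> used \<open>g\<close>, or a coin \<open>c\<close> with \<open>g + c \<le> w\<close>, then
  \<open>w - g\<close> resp. \<open>w - c\<close> would be a smaller counterexample.\<close>
lemma min_counterexample_optimal_rep:
  assumes sys: "is_system C"
    and ce: "opt C w < grd C w" and min: "\<And>v. v < w \<Longrightarrow> grd C v \<le> opt C v"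
    and g: "g \<in> set C" "g \<le> w" "\<And>c. c \<in> set C \<Longrightarrow> c \<le> w \<Longrightarrow> c \<le> g"
    and x: "rep_value C x = w" "rep_size C x = opt C w"
    and i: "i < length C" "0 < x i"
  shows "C ! i \<noteq> g" and "w < g + C ! i"
proof -
  let ?c = "C ! i"
  have c: "0 < ?c" "?c \<le> w" and opt_diff: "opt C (w - ?c) < opt C w"
    using opt_diff_coin[OF x(1) i] system_coins_pos[OF sys] i x(2) by auto
  have grd_w: "grd C w = Suc (grd C (w - g))"
    by (rule grd_largest_coin[OF sys g])
  show "?c \<noteq> g"
  proof
    assume "?c = g"
    then show False
      using grd_w min[of "w - ?c"] opt_diff ce c by simp
  qed
  show "w < g + ?c"
  proof (rule ccontr)
    assume "\<not> w < g + ?c"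
    then have "grd C (w - ?c) = Suc (grd C (w - ?c - g))"
      using g by (intro grd_largest_coin[OF sys]) auto
    moreover have "grd C (w - g) \<le> Suc (grd C (w - g - ?c))"
    proof -
      obtain y where "rep_value C y = w - g - ?c" "rep_size C y = grd C (w - g - ?c)"
        using greedy_rep[OF sys] by metis
      then have "opt C (w - g) \<le> Suc (grd C (w - g - ?c))"
        using opt_add_coin[OF _ i(1)] \<open>\<not> w < g + ?c\<close> by fastforce
      then show ?thesis
        using min[of "w - g"] system_coins_pos[OF sys g(1)] g(2) by simp
    qed
    ultimately show False
      using grd_w min[of "w - ?c"] opt_diff ce c by (simp add: add.commute)
  qed
qed

lemma ceiling_multiple_bounds:
  fixes a b :: nat
  assumes "0 < b"
  shows "a \<le> (a + b - 1) div b * b" "(a + b - 1) div b * b < a + b"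
proof -
  have "(a + b - 1) div b * b + (a + b - 1) mod b = a + b - 1"
    by simp
  moreover have "(a + b - 1) mod b < b"
    using assms by simp
  ultimately show "a \<le> (a + b - 1) div b * b" "(a + b - 1) div b * b < a + b"
    by linarith+
qed

locale canonical_six =
  fixes c2 c3 c4 c5 c6 :: nat
  assumes increasing: "1 < c2" "c2 < c3" "c3 < c4" "c4 < c5" "c5 < c6"
    and canonical: "canonical [1, c2, c3, c4, c5, c6]"
begin

abbreviation C :: "nat list" where "C \<equiv> [1, c2, c3, c4, c5, c6]"
abbreviation C' :: "nat list" where "C' \<equiv> [1, c2, c3, c4, c5]"

lemma system: "is_system C" "is_system C'" "is_system [1, c2, c3]"
  using increasing by (simp_all add: is_system_def)

lemma grd_C_eq_grd_C': "v < c6 \<Longrightarrow> grd C v = grd C' v"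
  using grd_snoc_less[of v c6 C'] by simp

lemma grd_below_c3: "t < c3 \<Longrightarrow> grd [1, c2, c3] t = t div c2 + t mod c2"
  by (simp add: grd_def)

lemma grd_C'_above_c5:
  assumes "c5 \<le> v" "v < c5 + c4"
  shows "grd C' v = Suc (grd [1, c2, c3] (v - c5))"
proof -
  have "v div c5 = 1" "v mod c5 = v - c5"
    using assms increasing by (simp_all add: div_nat_eqI le_mod_geq)
  then show ?thesis
    using assms by (simp add: grd_def)
qed

lemma two_coins_minus_largest:
  assumes "c \<in> set C" "c' \<in> set C" "g \<in> set C" "g \<le> c + c'"
    "\<forall>c''\<in>set C. c'' \<le> c + c' \<longrightarrow> c'' \<le> g"
  shows "c + c' - g \<in> {0, 1, c2, c3, c4, c5, c6}"
  using canonical_two_coins_minus_largest[OF system(1) canonical assms(1-4)] assms(5) by auto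

lemma sum_c4_c5: "c6 < c4 + c5 \<Longrightarrow> c4 + c5 = c6 + 1 \<or> c4 + c5 = c6 + c2 \<or> c4 + c5 = c6 + c3"
  using two_coins_minus_largest[of c4 c5 c6] increasing by (auto; linarith)

lemma double_c5: "c6 < c4 + c5 \<Longrightarrow> 2 * c5 = c6 + c2 \<or> 2 * c5 = c6 + c3 \<or> 2 * c5 = c6 + c4"
  using two_coins_minus_largest[of c5 c5 c6] sum_c4_c5 increasing by (auto; linarith)

lemma sum_c2_c5: "c6 \<le> c5 + c2 \<Longrightarrow> c5 + c2 = c6 \<or> c5 + c2 = c6 + 1"
  using two_coins_minus_largest[of c5 c2 c6] increasing by (auto; linarith)

lemma sum_c3_c5: "c6 \<le> c5 + c3 \<Longrightarrow> c5 + c3 = c6 \<or> c5 + c3 = c6 + 1 \<or> c5 + c3 = c6 + c2"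
  using two_coins_minus_largest[of c5 c3 c6] increasing by (auto; linarith)

lemma double_c3:
  "c4 \<le> 2 * c3 \<Longrightarrow> 2 * c3 < c5 \<Longrightarrow> 2 * c3 = c4 \<or> 2 * c3 = c4 + 1 \<or> 2 * c3 = c4 + c2"
  using two_coins_minus_largest[of c3 c3 c4] increasing by (auto; linarith)

lemma double_c4:
  "c6 \<le> 2 * c4 \<Longrightarrow> 2 * c4 = c6 \<or> 2 * c4 = c6 + 1 \<or> 2 * c4 = c6 + c2 \<or> 2 * c4 = c6 + c3"
  using two_coins_minus_largest[of c4 c4 c6] increasing by (auto; linarith)

lemma sum_c3_c4:
  "c5 \<le> c3 + c4 \<Longrightarrow> c3 + c4 < c6 \<Longrightarrow> c3 + c4 = c5 \<or> c3 + c4 = c5 + 1 \<or> c3 + c4 = c5 + c2"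
  using two_coins_minus_largest[of c3 c4 c5] increasing by (auto; linarith)

lemma c5_less_double_c4: "c6 < c4 + c5 \<Longrightarrow> c5 < 2 * c4"
  using double_c5 increasing by auto

lemma coins_if_c5_c2_eq_c6_1:
  assumes "c6 < c4 + c5" "c5 + c2 = c6 + 1"
  shows "c3 + 1 = 2 * c2" "c4 + 1 = c2 + c3" "c5 + 1 = c2 + c4"
proof -
  have "c5 + c3 = c6 + c2"
    using sum_c3_c5 assms increasing by fastforce
  moreover have "c4 + c5 = c6 + c3"
    using sum_c4_c5 assms calculation increasing by fastforce
  moreover have "2 * c5 = c6 + c4"
    using double_c5 assms calculation increasing by fastforce
  ultimately show "c3 + 1 = 2 * c2" "c4 + 1 = c2 + c3" "c5 + 1 = c2 + c4"
    using assms by linarith+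
qed

lemma coins_if_c5_c3_eq_c6_1:
  assumes "c6 < c4 + c5" "c5 + c3 = c6 + 1"
  obtains "c4 + 1 = c2 + c3" "c5 + 1 = 2 * c3"
    | "c4 + 1 = c2 + c3" "c5 + 2 = c2 + 2 * c3"
    | "c4 + 1 = 2 * c3" "c5 + 2 = 3 * c3"
proof -
  have c4_c5: "c4 + c5 = c6 + c2 \<or> c4 + c5 = c6 + c3"
    using sum_c4_c5 assms increasing by fastforce
  moreover have "2 * c5 = c6 + c3 \<or> 2 * c5 = c6 + c4"
    using double_c5 assms c4_c5 increasing by fastforce
  ultimately consider "c4 + c5 = c6 + c2" "2 * c5 = c6 + c3" | "c4 + c5 = c6 + c2" "2 * c5 = c6 + c4"
    | "c4 + c5 = c6 + c3" "2 * c5 = c6 + c4"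
    using increasing by linarith
  then show thesis
    using assms by cases (auto intro: that)
qed

lemma coins_if_c5_c3_eq_c6_c2:
  assumes "c6 < c4 + c5" "c5 + c3 = c6 + c2"
  shows "c4 + c2 = 2 * c3" "c5 + 2 * c2 = 3 * c3"
proof -
  have "c4 + c5 = c6 + c3"
    using sum_c4_c5 assms increasing by fastforce
  moreover have "2 * c5 = c6 + c4"
    using double_c5 assms calculation increasing by fastforce
  ultimately show "c4 + c2 = 2 * c3" "c5 + 2 * c2 = 3 * c3"
    using assms by linarith+
qed

lemma coin_families_if_c4_c5_eq_c6_1:
  assumes "c6 \<le> 2 * c4" "2 * c4 \<noteq> c5 + c3" "c4 + c5 = c6 + 1"
  shows "c2 = 2 \<and> c3 = 3 \<and> c5 = c4 + 1 \<and> c6 = 2 * c4 \<and> c4 > 4"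
proof -
  have c5: "c5 = c4 + 1" "c6 = 2 * c4"
    using assms increasing by linarith+
  have "2 * c5 = c6 + c2 \<or> 2 * c5 = c6 + c3 \<or> 2 * c5 = c6 + c4"
    using assms(3) by (intro double_c5) simp
  then have "c2 = 2"
    using c5 increasing by (elim disjE) linarith+
  moreover have "c3 + c4 = c5 \<or> c3 + c4 = c5 + 1 \<or> c3 + c4 = c5 + c2"
    using c5 increasing by (intro sum_c3_c4) linarith+
  then have "c3 = 3"
    using c5 calculation increasing by (elim disjE) linarith+
  ultimately show ?thesis
    using c5 assms(2) increasing by simp
qed

lemma coin_families_if_c4_c5_eq_c6_c2:
  assumes "c6 \<le> 2 * c4" "2 * c4 \<notin> {c5, c5 + 1, c5 + c2, c5 + c3}" "c4 + c5 = c6 + c2"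
  shows "c3 = 2 * c2 - 1 \<and> c5 = c2 + c4 - 1 \<and> c6 = 2 * c4 - 1 \<and> c4 \<ge> 3 * c2 - 1
    \<or> c3 = 2 * c2 \<and> c5 = c2 + c4 \<and> c6 = 2 * c4 \<and> c4 \<ge> 3 * c2 - 1 \<and> c4 \<noteq> 3 * c2"
proof -
  have excluded: "2 * c4 \<noteq> c5 + c2" "2 * c4 \<noteq> c5 + c3"
    using assms(2) by simp_all
  have "2 * c4 = c6 \<or> 2 * c4 = c6 + 1 \<or> 2 * c4 = c6 + c2 \<or> 2 * c4 = c6 + c3"
    using assms(1) by (rule double_c4)
  then have c6: "2 * c4 = c6 \<or> 2 * c4 = c6 + 1"
    using assms(3) increasing by (elim disjE) simp_all
  have "2 * c5 = c6 + c2 \<or> 2 * c5 = c6 + c3 \<or> 2 * c5 = c6 + c4"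
    using assms(1) increasing by (intro double_c5) linarith
  then have c3_c6: "c3 = 2 * c2 \<and> 2 * c4 = c6 \<or> c3 + 1 = 2 * c2 \<and> 2 * c4 = c6 + 1"
    using c6 excluded(1) assms(3) increasing by (elim disjE) linarith+
  have "c4 \<ge> 3 * c2 - 1"
  proof (rule ccontr)
    assume "\<not> c4 \<ge> 3 * c2 - 1"
    then have "c5 + c3 = c6 \<or> c5 + c3 = c6 + 1 \<or> c5 + c3 = c6 + c2"
      using c3_c6 assms(3) increasing by (intro sum_c3_c5) linarith
    then show False
      using c3_c6 excluded(2) assms(3) increasing \<open>\<not> c4 \<ge> 3 * c2 - 1\<close> by (elim disjE) linarith+
  qed
  then show ?thesis
    using c3_c6 excluded(2) assms(3) by auto
qed

lemma coin_families:
  assumes "c6 \<le> 2 * c4" "2 * c4 \<notin> {c5, c5 + 1, c5 + c2, c5 + c3}"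
  shows "(c2 = 2 \<and> c3 = 3 \<and> c5 = c4 + 1 \<and> c6 = 2 * c4 \<and> c4 > 4)
    \<or> (c3 = 2 * c2 - 1 \<and> c5 = c2 + c4 - 1 \<and> c6 = 2 * c4 - 1 \<and> c4 \<ge> 3 * c2 - 1)
    \<or> (c3 = 2 * c2 \<and> c5 = c2 + c4 \<and> c6 = 2 * c4 \<and> c4 \<ge> 3 * c2 - 1 \<and> c4 \<noteq> 3 * c2)"
proof -
  have "c6 < c4 + c5"
    using assms increasing by linarith
  then consider "c4 + c5 = c6 + 1" | "c4 + c5 = c6 + c2" | "c4 + c5 = c6 + c3"
    using sum_c4_c5 by blast
  then show ?thesis
  proof cases
    case 3
    then have "2 * c5 = c6 + c4"
      using double_c5 \<open>c6 < c4 + c5\<close> increasing by fastforce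
    then show ?thesis
      using 3 assms by simp
  qed (use coin_families_if_c4_c5_eq_c6_1 coin_families_if_c4_c5_eq_c6_c2 assms in blast)+
qed

lemma int_grd_C_above_c5:
  assumes "c5 \<le> v" "v < c6" "v < c5 + c3"
  shows "int (grd C v) = int v - int c5 + 1 - int ((v - c5) div c2) * (int c2 - 1)"
proof -
  have "grd C v = Suc ((v - c5) div c2 + (v - c5) mod c2)"
    using assms increasing grd_C_eq_grd_C' grd_C'_above_c5 grd_below_c3 by simp
  moreover have "int (v - c5) = int ((v - c5) div c2) * int c2 + int ((v - c5) mod c2)"
    by (metis div_mult_mod_eq of_nat_add of_nat_mult)
  ultimately show ?thesis
    using assms(1) by (simp add: algebra_simps)
qed

lemma ceiling_multiple_c3_range:
  assumes "c3 = 2 * c2 - 1 \<and> c5 = c2 + c4 - 1 \<and> c6 = 2 * c4 - 1 \<and> c4 \<ge> 3 * c2 - 1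
    \<or> c3 = 2 * c2 \<and> c5 = c2 + c4 \<and> c6 = 2 * c4 \<and> c4 \<ge> 3 * c2 - 1 \<and> c4 \<noteq> 3 * c2"
  defines "l \<equiv> (c5 + c3 - 1) div c3"
  shows "c5 \<le> l * c3" "l * c3 < c5 + c3" "l * c3 < c6"
proof -
  show lower: "c5 \<le> l * c3" and upper: "l * c3 < c5 + c3"
    unfolding l_def using ceiling_multiple_bounds[of c3 c5] increasing by simp_all
  show "l * c3 < c6"
  proof (cases "c4 = 3 * c2 - 1 \<and> c3 = 2 * c2")
    case True
    then have "l * c3 < c3 * 3" "c3 * 1 < l * c3"
      using assms(1) lower upper increasing by linarith+
    then have "l = 2"
      by simp
    moreover have "c6 = 2 * c4"
      using True assms(1) by auto
    ultimately show ?thesis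
      using True increasing by simp
  qed (use assms(1) upper increasing in linarith)
qed

end

locale min_counterexample = canonical_six +
  fixes w :: nat and x :: "nat \<Rightarrow> nat"
  assumes counterexample: "opt C' w < grd C' w"
    and minimal: "\<And>v. v < w \<Longrightarrow> grd C' v \<le> opt C' v"
    and optimal: "rep_value C' x = w" "rep_size C' x = opt C' w"
begin

lemma c6_le_w: "c6 \<le> w"
proof (rule ccontr)
  assume "\<not> c6 \<le> w"
  then have "grd C' w = grd C w"
    using grd_C_eq_grd_C' by simp
  also have "\<dots> \<le> opt C w"
    using canonical by (rule canonical_grd_le_opt)
  also have "\<dots> \<le> opt C' w"
    using opt_snoc_le[OF system(2), of c6 w] by simp
  finally show False
    using counterexample by simp
qed

lemma used_coin_bound:
  assumes "i < 5" "0 < x i"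
  shows "C' ! i \<noteq> c5" and "w < c5 + C' ! i"
proof -
  have "c \<le> c5" if "c \<in> set C'" for c
    using that increasing by auto
  then show "C' ! i \<noteq> c5" and "w < c5 + C' ! i"
    using min_counterexample_optimal_rep[OF system(2) counterexample minimal _ _ _ optimal, of c5 i]
      assms c6_le_w increasing by auto
qed

lemma w_eq: "w = c2 * x 1 + c3 * x 2 + c4 * x 3"
  and opt_C'_w: "opt C' w = x 1 + x 2 + x 3"
proof -
  have "x 0 = 0"
    using used_coin_bound(2)[of 0] c6_le_w increasing by (auto simp: numeral_eq_Suc)
  moreover have "x 4 = 0"
    using used_coin_bound(1)[of 4] by (auto simp: numeral_eq_Suc)
  ultimately show "w = c2 * x 1 + c3 * x 2 + c4 * x 3" "opt C' w = x 1 + x 2 + x 3"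
    using optimal by (simp_all add: numeral_eq_Suc)
qed

lemma c2_used: "0 < x 1 \<Longrightarrow> w < c5 + c2"
  and c3_used: "0 < x 2 \<Longrightarrow> w < c5 + c3"
  and c4_used: "0 < x 3 \<Longrightarrow> w < c5 + c4"
  using used_coin_bound(2)[of 1] used_coin_bound(2)[of 2] used_coin_bound(2)[of 3]
  by (simp_all add: numeral_eq_Suc)

lemma w_less_c5_c4: "w < c5 + c4"
proof -
  have "0 < x 1 \<or> 0 < x 2 \<or> 0 < x 3"
    using w_eq c6_le_w increasing by (cases "x 1 = 0"; cases "x 2 = 0"; cases "x 3 = 0") auto
  then show ?thesis
    using c2_used c3_used c4_used increasing by auto
qed

lemma c6_less_c4_c5: "c6 < c4 + c5"
  using w_less_c5_c4 c6_le_w by simp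

lemma coins_le_grd: "x 1 + x 2 + x 3 \<le> grd [1, c2, c3] (w - c5)"
  using counterexample grd_C'_above_c5[of w] opt_C'_w w_less_c5_c4 c6_le_w increasing by simp

lemma two_le_coins: "2 \<le> x 1 + x 2 + x 3"
proof (rule ccontr)
  assume "\<not> 2 \<le> x 1 + x 2 + x 3"
  have "w \<le> c4 * (x 1 + x 2 + x 3)"
    using w_eq increasing by (simp add: distrib_left add_mono)
  also have "\<dots> \<le> c4"
    using \<open>\<not> 2 \<le> x 1 + x 2 + x 3\<close> by simp
  finally show False
    using c6_le_w increasing by simp
qed

lemma c2_unused: "x 1 = 0"
proof (rule ccontr)
  \<comment> \<open>All coins except 1 are then \<open>1 mod k\<close>, and so is \<open>w\<close>; hence the number \<open>N\<close>
    of coins used is \<open>1 mod k\<close>, which is impossible for \<open>2 \<le> N \<le> k\<close>.\<close>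
  assume "x 1 \<noteq> 0"
  then have "w < c5 + c2"
    by (intro c2_used) simp
  then have c5_c2: "c5 + c2 = c6 + 1" and w: "w = c6"
    using sum_c2_c5 c6_le_w by fastforce+
  obtain k where k: "c2 = Suc k"
    using increasing by (cases c2) auto
  have coins: "c3 = 2 * k + 1" "c4 = 3 * k + 1" "c5 = 4 * k + 1" "w = 5 * k + 1"
    using coins_if_c5_c2_eq_c6_1[OF c6_less_c4_c5 c5_c2] c5_c2 w k by linarith+
  define N where "N = x 1 + x 2 + x 3"
  have "N \<le> k"
    using coins_le_grd grd_below_c3[of k] coins k increasing by (simp add: N_def)
  moreover have "2 \<le> N"
    using two_le_coins by (simp add: N_def)
  moreover have "N + k * (x 1 + 2 * x 2 + 3 * x 3) = 1 + k * 5"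
    using w_eq coins k by (simp add: N_def algebra_simps)
  then have "N mod k = 1 mod k"
    by (metis mod_mult_self2)
  ultimately show False
    by (cases "N = k") auto
qed

lemma c4_used_at_most_once: "0 < x 2 \<Longrightarrow> x 3 \<le> 1"
proof (rule ccontr)
  assume "0 < x 2" "\<not> x 3 \<le> 1"
  then have "c3 \<le> c3 * x 2" "c4 * 2 \<le> c4 * x 3"
    by simp_all
  then have "c3 + c4 * 2 \<le> w"
    using w_eq by linarith
  then show False
    using c3_used[OF \<open>0 < x 2\<close>] c5_less_double_c4[OF c6_less_c4_c5] by simp
qed

lemma c3_unused_if_c5_c3_eq_c6_1_and_c4_once:
  assumes c5_c3: "c5 + c3 = c6 + 1" and x3: "x 3 = 1"
  shows "x 2 = 0"
proof (rule ccontr)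
  assume "x 2 \<noteq> 0"
  then have "w = c6"
    using c3_used c6_le_w c5_c3 by fastforce
  then have x2: "c3 * x 2 + c4 = c6"
    using w_eq c2_unused x3 by simp
  from coins_if_c5_c3_eq_c6_1[OF c6_less_c4_c5 c5_c3] show False
  proof cases
    case 1
    then have "c3 \<le> c3 * x 2" "c3 * x 2 < c3 * 2"
      using x2 c5_c3 increasing by linarith+
    then have "x 2 = 1"
      by simp
    then have "w - c5 = c2"
      using x2 1 c5_c3 \<open>w = c6\<close> by simp
    then show False
      using coins_le_grd grd_le_1_iff[OF system(3), of c2] \<open>x 2 = 1\<close> x3 c2_unused by simp
  next
    case 2
    then have "c3 < c3 * x 2" "c3 * x 2 < c3 * 2"
      using x2 c5_c3 increasing by linarith+
    then show False
      by simp
  next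
    case 3
    then have "c3 < c3 * x 2" "c3 * x 2 < c3 * 2"
      using x2 c5_c3 increasing by linarith+
    then show False
      by simp
  qed
qed

lemma c3_unused_if_c5_c3_eq_c6_1_and_c4_unused:
  assumes c5_c3: "c5 + c3 = c6 + 1" and x3: "x 3 = 0"
  shows "x 2 = 0"
proof (rule ccontr)
  assume "x 2 \<noteq> 0"
  then have "w = c6"
    using c3_used c6_le_w c5_c3 by fastforce
  then have x2: "c3 * x 2 = c6"
    using w_eq c2_unused x3 by simp
  from coins_if_c5_c3_eq_c6_1[OF c6_less_c4_c5 c5_c3] show False
  proof cases
    case 1
    then have "c3 * 2 < c3 * x 2" "c3 * x 2 < c3 * 3"
      using x2 c5_c3 increasing by linarith+
    then show False
      by simp
  next
    case 2
    then have "c3 * 2 < c3 * x 2" "c3 * x 2 < c3 * 4"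
      using x2 c5_c3 increasing by linarith+
    then have "x 2 = 3"
      by simp
    then have "c2 = 3"
      using x2 2 c5_c3 by simp
    moreover have "2 * c3 = c4 \<or> 2 * c3 = c4 + 1 \<or> 2 * c3 = c4 + c2"
      using 2 calculation increasing by (intro double_c3) linarith+
    ultimately have "c3 = 5"
      using 2 increasing by linarith
    moreover have "w - c5 = 4"
      using \<open>w = c6\<close> c5_c3 calculation by simp
    ultimately have "grd [1, c2, c3] (w - c5) = 2"
      using \<open>c2 = 3\<close> by (simp add: grd_def)
    then show False
      using coins_le_grd \<open>x 2 = 3\<close> x3 c2_unused by simp
  next
    case 3
    then have "c3 * 2 < c3 * x 2" "c3 * x 2 < c3 * 4"
      using x2 c5_c3 increasing by linarith+
    then have "x 2 = 3"
      by simp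
    then have "w - c5 = c2"
      using x2 3 c5_c3 \<open>w = c6\<close> increasing by simp
    then show False
      using coins_le_grd grd_le_1_iff[OF system(3), of c2] \<open>x 2 = 3\<close> x3 c2_unused by simp
  qed
qed

lemma c3_unused_if_c5_c3_eq_c6_c2:
  assumes c5_c3: "c5 + c3 = c6 + c2"
  shows "x 2 = 0"
proof (rule ccontr)
  assume "x 2 \<noteq> 0"
  then have w: "c6 \<le> w" "w < c5 + c3" "w = c3 * x 2 + c4 * x 3"
    using c3_used c6_le_w w_eq c2_unused by auto
  have coins: "c4 + c2 = 2 * c3" "c5 + 2 * c2 = 3 * c3"
    using coins_if_c5_c3_eq_c6_c2[OF c6_less_c4_c5 c5_c3] by simp_all
  have "x 3 = 0 \<or> x 3 = 1"
    using c4_used_at_most_once \<open>x 2 \<noteq> 0\<close> by fastforce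
  then show False
  proof
    assume x3: "x 3 = 1"
    have w1: "w = c3 * x 2 + c4"
      using w x3 by simp
    have "c3 \<le> c3 * x 2"
      using \<open>x 2 \<noteq> 0\<close> by simp
    moreover have "c3 * x 2 < c3 * 2"
      using w1 w coins c5_c3 by linarith
    ultimately have "x 2 = 1"
      by simp
    then have "w - c5 = c2"
      using w x3 coins by simp
    then show False
      using coins_le_grd grd_le_1_iff[OF system(3), of c2] \<open>x 2 = 1\<close> x3 c2_unused by simp
  next
    assume x3: "x 3 = 0"
    then have "w = c3 * x 2"
      using w by simp
    then have "c3 * 1 < c3 * x 2" "c3 * x 2 < c3 * 4"
      using w coins c5_c3 increasing by linarith+
    then have "x 2 = 2 \<or> x 2 = 3"
      by auto
    then show False
    proof
      assume "x 2 = 2"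
      then have "c6 \<le> c5 + c2"
        using w x3 coins by simp
      then have "w - c5 = 0 \<or> w - c5 = 1"
        using sum_c2_c5 w \<open>x 2 = 2\<close> x3 coins c5_c3 by auto
      then show False
        using coins_le_grd grd_le_1_iff[OF system(3), of "w - c5"] \<open>x 2 = 2\<close> x3 c2_unused by auto
    next
      assume "x 2 = 3"
      then have "w - c5 = 2 * c2" "2 * c2 < c3"
        using w x3 coins by simp_all
      then show False
        using coins_le_grd grd_below_c3[of "2 * c2"] \<open>x 2 = 3\<close> x3 c2_unused increasing by simp
    qed
  qed
qed

lemma c3_unused: "x 2 = 0"
proof (rule ccontr)
  assume "x 2 \<noteq> 0"
  then have "c6 \<le> w" "w < c5 + c3"
    using c3_used c6_le_w by auto
  then have "c5 + c3 = c6 + 1 \<or> c5 + c3 = c6 + c2"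
    using sum_c3_c5 by fastforce
  moreover have "x 3 = 0 \<or> x 3 = 1"
    using c4_used_at_most_once \<open>x 2 \<noteq> 0\<close> by fastforce
  ultimately show False
    using c3_unused_if_c5_c3_eq_c6_1_and_c4_once c3_unused_if_c5_c3_eq_c6_1_and_c4_unused
      c3_unused_if_c5_c3_eq_c6_c2 \<open>x 2 \<noteq> 0\<close> by blast
qed

lemma c4_used_twice: "x 3 = 2"
proof -
  have w: "w = c4 * x 3" "2 \<le> x 3"
    using w_eq two_le_coins c2_unused c3_unused by simp_all
  moreover have "c4 * x 3 < c4 * 3"
    using w w_less_c5_c4 c5_less_double_c4[OF c6_less_c4_c5] by linarith
  ultimately show ?thesis
    by simp
qed

lemma double_c4_constraints: "c6 \<le> 2 * c4" "2 * c4 \<notin> {c5, c5 + 1, c5 + c2, c5 + c3}"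
proof -
  have w: "w = 2 * c4"
    using w_eq c2_unused c3_unused c4_used_twice by simp
  then show "c6 \<le> 2 * c4"
    using c6_le_w by simp
  have "\<not> grd [1, c2, c3] (2 * c4 - c5) \<le> 1"
    using coins_le_grd w c2_unused c3_unused c4_used_twice by simp
  then show "2 * c4 \<notin> {c5, c5 + 1, c5 + c2, c5 + c3}"
    using grd_le_1_iff[OF system(3)] by auto
qed

end

theorem theorem9:
  fixes c2 c3 c4 c5 c6 :: nat
  assumes sys: "is_system [1, c2, c3, c4, c5, c6]"
    and can: "canonical [1, c2, c3, c4, c5, c6]"
    and noncan: "\<not> canonical [1, c2, c3, c4, c5]"
  defines "l \<equiv> (c5 + c3 - 1) div c3"
  shows "(c2 = 2 \<and> c3 = 3 \<and> c5 = c4 + 1 \<and> c6 = 2 * c4 \<and> c4 > 4)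
    \<or> (c3 = 2 * c2 - 1 \<and> c5 = c2 + c4 - 1 \<and> c6 = 2 * c4 - 1 \<and> c4 \<ge> 3 * c2 - 1
        \<and> int (grd [1, c2, c3, c4, c5, c6] (l * c3))
            = int (l * c3) - int c5 + 1 - int ((l * c3 - c5) div c2) * (int c2 - 1)
        \<and> grd [1, c2, c3, c4, c5, c6] (l * c3) \<le> l)
    \<or> (c3 = 2 * c2 \<and> c5 = c2 + c4 \<and> c6 = 2 * c4 \<and> c4 \<ge> 3 * c2 - 1 \<and> c4 \<noteq> 3 * c2
        \<and> int (grd [1, c2, c3, c4, c5, c6] (l * c3))
            = int (l * c3) - int c5 + 1 - int ((l * c3 - c5) div c2) * (int c2 - 1)
        \<and> grd [1, c2, c3, c4, c5, c6] (l * c3) \<le> l)"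
proof -
  interpret canonical_six c2 c3 c4 c5 c6
    using sys can by unfold_locales (auto simp: is_system_def)
  obtain w where w: "opt C' w < grd C' w" "\<And>v. v < w \<Longrightarrow> grd C' v \<le> opt C' v"
    using not_canonical_min_counterexample[OF noncan] by blast
  obtain x where "rep_value C' x = w" "rep_size C' x = opt C' w"
    using greedy_rep[OF system(2)] opt_attained by metis
  then interpret min_counterexample c2 c3 c4 c5 c6 w x
    using w by unfold_locales
  have "grd C (l * c3) \<le> l"
    using canonical_grd_multiple_le[OF canonical, of c3] by simp
  moreover have "int (grd C (l * c3)) = int (l * c3) - int c5 + 1 - int ((l * c3 - c5) div c2) * (int c2 - 1)"
    if "c3 = 2 * c2 - 1 \<and> c5 = c2 + c4 - 1 \<and> c6 = 2 * c4 - 1 \<and> c4 \<ge> 3 * c2 - 1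
      \<or> c3 = 2 * c2 \<and> c5 = c2 + c4 \<and> c6 = 2 * c4 \<and> c4 \<ge> 3 * c2 - 1 \<and> c4 \<noteq> 3 * c2"
    using int_grd_C_above_c5 ceiling_multiple_c3_range[OF that] unfolding l_def by simp
  ultimately show ?thesis
    using coin_families[OF double_c4_constraints] by blast
qed

end
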